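(* Let $R$ be a commutative ring. Every $GV$-torsion $R$-module is absolutely $w$-pure.
   Context: All rings are commutative with identity. A $GV$-ideal of $R$ is a finitely generated ideal $J$ of $R$ such that the natural homomorphism $R\to \mathrm{Hom}_R(J,R)$ is an isomorphism; $GV(R)$ denotes the set of $GV$-ideals of $R$. For an $R$-module $M$, $\mathrm{tor}_{GV}(M)=\{x\in M : Jx=0 \text{ for some } J\in GV(R)\}$; $M$ is $GV$-torsion if $\mathrm{tor}_{GV}(M)=M$. An $R$-module $A$ is absolutely $w$-pure if $\mathrm{Ext}^1_R(N,A)$ is a $GV$-torsion $R$-module for every finitely presented $R$-module $N$. *)

theory Defs
  imports Main "HOL.Modules" "HOL-Library.FuncSet"
begin

definition fg_ideal :: "'r::comm_ring_1 set \<Rightarrow> bool" where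
  "fg_ideal J \<longleftrightarrow> (\<exists>S. finite S \<and> J = {\<Sum>s\<in>S. c s * s | c. True})"

text \<open>Hom_R(J,R), functions represented extensionally on J.\<close>
definition Hom_ideal :: "'r::comm_ring_1 set \<Rightarrow> ('r \<Rightarrow> 'r) set" where
  "Hom_ideal J = {f. (\<forall>x\<in>J. \<forall>y\<in>J. f (x + y) = f x + f y)
                   \<and> (\<forall>r. \<forall>x\<in>J. f (r * x) = r * f x)
                   \<and> f \<in> extensional J}"

definition nat_hom_ideal :: "'r::comm_ring_1 set \<Rightarrow> 'r \<Rightarrow> ('r \<Rightarrow> 'r)" where
  "nat_hom_ideal J r = (\<lambda>x\<in>J. r * x)"

definition GV_ideal :: "'r::comm_ring_1 set \<Rightarrow> bool" where
  "GV_ideal J \<longleftrightarrow> fg_ideal J \<and> bij_betw (nat_hom_ideal J) UNIV (Hom_ideal J)"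

definition GV_torsion_on :: "'x set \<Rightarrow> 'x \<Rightarrow> ('r::comm_ring_1 \<Rightarrow> 'x \<Rightarrow> 'x) \<Rightarrow> bool" where
  "GV_torsion_on M z sc \<longleftrightarrow> (\<forall>x\<in>M. \<exists>J. GV_ideal J \<and> (\<forall>j\<in>J. sc j x = z))"

definition GV_torsion :: "('r::comm_ring_1 \<Rightarrow> 'm::ab_group_add \<Rightarrow> 'm) \<Rightarrow> bool" where
  "GV_torsion sc \<longleftrightarrow> GV_torsion_on UNIV 0 sc"

definition lincomb :: "('r \<Rightarrow> 'm \<Rightarrow> 'm) \<Rightarrow> 'r list \<Rightarrow> 'm list \<Rightarrow> 'm::ab_group_add" where
  "lincomb sc cs xs = sum_list (map2 sc cs xs)"

text \<open>N is finitely presented: finitely generated by xs, and the module of relations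
  among xs (a submodule of R^n, n = length xs) is finitely generated, by rels.\<close>
definition fin_presented :: "('r::comm_ring_1 \<Rightarrow> 'n::ab_group_add \<Rightarrow> 'n) \<Rightarrow> bool" where
  "fin_presented sc \<longleftrightarrow> module sc \<and>
     (\<exists>xs rels. module.span sc (set xs) = UNIV
        \<and> (\<forall>\<rho>\<in>set rels. length \<rho> = length xs \<and> lincomb sc \<rho> xs = 0)
        \<and> (\<forall>c. length c = length xs \<and> lincomb sc c xs = 0 \<longrightarrow>
             (\<exists>a. length a = length rels \<and>
                  c = map (\<lambda>i. \<Sum>k<length rels. a ! k * (rels ! k) ! i) [0..<length xs])))"

definition free_module :: "('r::comm_ring_1 \<Rightarrow> 'p::ab_group_add \<Rightarrow> 'p) \<Rightarrow> bool" where
  "free_module sc \<longleftrightarrow> module sc \<and> (\<exists>B. \<not> module.dependent sc B \<and> module.span sc B = UNIV)"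

text \<open>P2 --d2--> P1 --d1--> P0 --d0--> N --> 0 exact, with P0, P1, P2 free:
  the beginning of a free (hence projective) resolution of N.\<close>
definition free_resolution2 ::
  "('r::comm_ring_1 \<Rightarrow> 'p2::ab_group_add \<Rightarrow> 'p2) \<Rightarrow> ('p2 \<Rightarrow> 'p1) \<Rightarrow>
   ('r \<Rightarrow> 'p1::ab_group_add \<Rightarrow> 'p1) \<Rightarrow> ('p1 \<Rightarrow> 'p0) \<Rightarrow>
   ('r \<Rightarrow> 'p0::ab_group_add \<Rightarrow> 'p0) \<Rightarrow> ('p0 \<Rightarrow> 'n) \<Rightarrow>
   ('r \<Rightarrow> 'n::ab_group_add \<Rightarrow> 'n) \<Rightarrow> bool" where
  "free_resolution2 s2 d2 s1 d1 s0 d0 sN \<longleftrightarrow>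
     free_module s2 \<and> free_module s1 \<and> free_module s0 \<and>
     module_hom s2 s1 d2 \<and> module_hom s1 s0 d1 \<and> module_hom s0 sN d0 \<and>
     surj d0 \<and> range d1 = {x. d0 x = 0} \<and> range d2 = {x. d1 x = 0}"

definition ext1_cocycles ::
  "('p2 \<Rightarrow> 'p1) \<Rightarrow> ('r::comm_ring_1 \<Rightarrow> 'p1::ab_group_add \<Rightarrow> 'p1) \<Rightarrow>
   ('r \<Rightarrow> 'a::ab_group_add \<Rightarrow> 'a) \<Rightarrow> ('p1 \<Rightarrow> 'a) set" where
  "ext1_cocycles d2 s1 sA = {\<phi>. module_hom s1 sA \<phi> \<and> (\<forall>x. \<phi> (d2 x) = 0)}"

definition ext1_coboundaries ::
  "('p1 \<Rightarrow> 'p0) \<Rightarrow> ('r::comm_ring_1 \<Rightarrow> 'p0::ab_group_add \<Rightarrow> 'p0) \<Rightarrow>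
   ('r \<Rightarrow> 'a::ab_group_add \<Rightarrow> 'a) \<Rightarrow> ('p1 \<Rightarrow> 'a) set" where
  "ext1_coboundaries d1 s0 sA = {\<psi> \<circ> d1 | \<psi>. module_hom s0 sA \<psi>}"

text \<open>Ext^1_R(N,A) = cocycles / coboundaries, as a set of cosets,
  with zero element the coset of coboundaries and the induced scalar action.\<close>
definition ext1_coset :: "('p1 \<Rightarrow> 'a::ab_group_add) set \<Rightarrow> ('p1 \<Rightarrow> 'a) \<Rightarrow> ('p1 \<Rightarrow> 'a) set" where
  "ext1_coset Bd \<phi> = {(\<lambda>x. \<phi> x + \<beta> x) | \<beta>. \<beta> \<in> Bd}"

definition Ext1 ::
  "('p2 \<Rightarrow> 'p1) \<Rightarrow> ('r::comm_ring_1 \<Rightarrow> 'p1::ab_group_add \<Rightarrow> 'p1) \<Rightarrow> ('p1 \<Rightarrow> 'p0) \<Rightarrow>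
   ('r \<Rightarrow> 'p0::ab_group_add \<Rightarrow> 'p0) \<Rightarrow> ('r \<Rightarrow> 'a::ab_group_add \<Rightarrow> 'a) \<Rightarrow> ('p1 \<Rightarrow> 'a) set set" where
  "Ext1 d2 s1 d1 s0 sA =
     ext1_coset (ext1_coboundaries d1 s0 sA) ` ext1_cocycles d2 s1 sA"

definition Ext1_zero ::
  "('p1 \<Rightarrow> 'p0) \<Rightarrow> ('r::comm_ring_1 \<Rightarrow> 'p0::ab_group_add \<Rightarrow> 'p0) \<Rightarrow>
   ('r \<Rightarrow> 'a::ab_group_add \<Rightarrow> 'a) \<Rightarrow> ('p1 \<Rightarrow> 'a) set" where
  "Ext1_zero d1 s0 sA = ext1_coboundaries d1 s0 sA"

definition Ext1_scale ::
  "('p1 \<Rightarrow> 'p0) \<Rightarrow> ('r::comm_ring_1 \<Rightarrow> 'p0::ab_group_add \<Rightarrow> 'p0) \<Rightarrow>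
   ('r \<Rightarrow> 'a::ab_group_add \<Rightarrow> 'a) \<Rightarrow> 'r \<Rightarrow> ('p1 \<Rightarrow> 'a) set \<Rightarrow> ('p1 \<Rightarrow> 'a) set" where
  "Ext1_scale d1 s0 sA r C =
     {(\<lambda>x. sA r (\<phi> x) + \<beta> x) | \<phi> \<beta>. \<phi> \<in> C \<and> \<beta> \<in> ext1_coboundaries d1 s0 sA}"

text \<open>The modules N, P_i range over all types (free type variables).\<close>
definition abs_w_pure_wrt ::
  "('r::comm_ring_1 \<Rightarrow> 'a::ab_group_add \<Rightarrow> 'a) \<Rightarrow>
   ('r \<Rightarrow> 'p2::ab_group_add \<Rightarrow> 'p2) \<Rightarrow> ('p2 \<Rightarrow> 'p1) \<Rightarrow>
   ('r \<Rightarrow> 'p1::ab_group_add \<Rightarrow> 'p1) \<Rightarrow> ('p1 \<Rightarrow> 'p0) \<Rightarrow>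
   ('r \<Rightarrow> 'p0::ab_group_add \<Rightarrow> 'p0) \<Rightarrow> ('p0 \<Rightarrow> 'n) \<Rightarrow>
   ('r \<Rightarrow> 'n::ab_group_add \<Rightarrow> 'n) \<Rightarrow> bool" where
  "abs_w_pure_wrt sA s2 d2 s1 d1 s0 d0 sN \<longleftrightarrow>
     (fin_presented sN \<and> free_resolution2 s2 d2 s1 d1 s0 d0 sN \<longrightarrow>
      GV_torsion_on (Ext1 d2 s1 d1 s0 sA) (Ext1_zero d1 s0 sA) (Ext1_scale d1 s0 sA))"

end

theory Submission
  imports Defs "HOL-Library.Function_Algebras"
begin

text \<open>Let \<open>\<phi>\<close> be a 1-cocycle of \<open>Hom(P\<^sub>*, A)\<close> for a free resolution
  \<open>P\<^sub>2 \<rightarrow> P\<^sub>1 \<rightarrow> P\<^sub>0 \<rightarrow> N\<close>. Comparing the resolution with a finite presentation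
  \<open>R\<^sup>r \<rightarrow> R\<^sup>m \<rightarrow> N\<close> yields a map \<open>Y : P\<^sub>0 \<rightarrow> P\<^sub>1\<close> and a finite set \<open>Z \<subseteq> P\<^sub>1\<close> with
  \<open>x \<in> Y (d\<^sub>1 x) + span Z + im d\<^sub>2\<close> for every \<open>x \<in> P\<^sub>1\<close>. So \<open>\<phi>\<close> and the coboundary
  \<open>\<phi> \<circ> Y \<circ> d\<^sub>1\<close> differ only through the finitely many values \<open>\<phi> z\<close>, \<open>z \<in> Z\<close>. As the
  product of two GV-ideals is again a GV-ideal, a single GV-ideal \<open>J\<close> kills all of them,
  and then \<open>j \<phi> = (j \<phi> \<circ> Y) \<circ> d\<^sub>1\<close> is a coboundary for every \<open>j \<in> J\<close>.\<close>

lemma module_hom_extend_basis: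
  assumes m1: "module s1" and m2: "module s2"
    and ind: "\<not> module.dependent s1 B" and sp: "module.span s1 B = UNIV"
  obtains g where "module_hom s1 s2 g" and "\<And>b. b \<in> B \<Longrightarrow> g b = y b"
proof -
  interpret M1: module s1 by fact
  interpret M2: module s2 by fact
  let ?R = "M1.representation B"
  define g where "g x = (\<Sum>b | ?R x b \<noteq> 0. s2 (?R x b) (y b))" for x
  have g_eq: "g x = (\<Sum>b\<in>T. s2 (?R x b) (y b))" if "finite T" "{b. ?R x b \<noteq> 0} \<subseteq> T" for x T
    unfolding g_def by (rule sum.mono_neutral_left) (use that in auto)
  have fin: "finite {b. ?R x b \<noteq> 0}" for x by (rule M1.finite_representation)
  have "module_hom s1 s2 g"
    unfolding module_hom_iff
  proof (intro conjI allI)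
    fix x x'
    let ?T = "{b. ?R x b \<noteq> 0} \<union> {b. ?R x' b \<noteq> 0}"
    have "?R (x + x') = (\<lambda>b. ?R x b + ?R x' b)"
      by (rule M1.representation_add) (use ind sp in auto)
    moreover have "g (x + x') = (\<Sum>b\<in>?T. s2 (?R (x + x') b) (y b))"
      by (rule g_eq) (use fin calculation in auto)
    ultimately show "g (x + x') = g x + g x'"
      using g_eq[of ?T x] g_eq[of ?T x'] fin by (simp add: M2.scale_left_distrib sum.distrib)
  next
    fix c x
    have "?R (s1 c x) = (\<lambda>b. c * ?R x b)"
      by (rule M1.representation_scale) (use ind sp in auto)
    moreover have "g (s1 c x) = (\<Sum>b | ?R x b \<noteq> 0. s2 (?R (s1 c x) b) (y b))"
      by (rule g_eq) (use fin calculation in auto)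
    ultimately show "g (s1 c x) = s2 c (g x)"
      by (simp add: g_def M2.scale_sum_right)
  qed (fact m1 m2)+
  moreover have "g b = y b" if "b \<in> B" for b
  proof -
    have "?R b = (\<lambda>v. if v = b then 1 else 0)"
      by (rule M1.representation_basis) (use ind that in auto)
    then show ?thesis using g_eq[of "{b}" b] by simp
  qed
  ultimately show ?thesis using that by blast
qed

lemma free_module_lift:
  assumes free: "free_module s" and f: "module_hom s s2 f" and h: "module_hom s1 s2 h"
    and range: "range f \<subseteq> range h"
  obtains g where "module_hom s s1 g" and "\<And>x. h (g x) = f x"
proof -
  obtain B where ind: "\<not> module.dependent s B" and sp: "module.span s B = UNIV"
    and m: "module s"
    using free unfolding free_module_def by auto
  have m1: "module s1" and m2: "module s2" using h unfolding module_hom_iff by auto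
  have hy: "h (inv h (f b)) = f b" for b
    by (rule f_inv_into_f[OF range_subsetD[OF range]])
  obtain g where g: "module_hom s s1 g" and gB: "\<And>b. b \<in> B \<Longrightarrow> g b = inv h (f b)"
    using module_hom_extend_basis[OF m m1 ind sp, of "\<lambda>b. inv h (f b)"] by blast
  interpret module_pair s s2 using m m2 by (simp add: module_pair_def)
  have "h (g x) = f x" for x
    by (rule module_hom_eq_on_span[where B = B])
       (use g h f gB hy sp in \<open>auto intro: module_hom_compose[unfolded comp_def]\<close>)
  with g that show ?thesis by blast
qed

text \<open>The ideals of \<open>R\<close> are its submodules over itself, so \<open>ideal.span S\<close> is the ideal
  generated by \<open>S\<close>. The interpreted \<open>scale_scale\<close> is associativity read backwards and
  would loop against \<open>mult.assoc\<close> as a simp rule.\<close>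

interpretation ideal: module "(*) :: 'a::comm_ring_1 \<Rightarrow> 'a \<Rightarrow> 'a"
  by unfold_locales (auto simp: algebra_simps)

declare ideal.scale_scale [simp del]

lemma fg_ideal_iff_span: "fg_ideal J \<longleftrightarrow> (\<exists>S. finite S \<and> J = ideal.span S)"
proof -
  have "{\<Sum>s\<in>S. c s * s | c. True} = ideal.span S" if "finite S" for S :: "'a set"
    using that by (auto simp: ideal.span_finite)
  then show ?thesis
    unfolding fg_ideal_def by (intro ex_cong1 conj_cong refl) simp_all
qed

lemma ideal_subspace_colon: "ideal.subspace I \<Longrightarrow> ideal.subspace {a. a * b \<in> I}"
  by (auto simp: ideal.subspace_def distrib_right mult.assoc)

lemma ideal_subspace_annihilator:
  assumes "module sA"
  shows "ideal.subspace {r. \<forall>b\<in>F. sA r b = 0}"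
proof -
  interpret module sA by fact
  show ?thesis by (auto simp: ideal.subspace_def scale_left_distrib simp flip: scale_scale)
qed

lemma ideal_span_times:
  assumes a: "a \<in> ideal.span S1" and b: "b \<in> ideal.span S2"
  shows "a * b \<in> ideal.span ((\<lambda>(s, t). s * t) ` (S1 \<times> S2))"
    (is "_ \<in> ideal.span ?P")
proof -
  have gen: "s * b \<in> ideal.span ?P" if "s \<in> S1" for s
    using b
  proof (induction rule: ideal.span_induct)
    show "ideal.subspace {b. s * b \<in> ideal.span ?P}"
      using ideal_subspace_colon[of "ideal.span ?P" s] by (simp add: mult.commute)
    show "s * t \<in> ideal.span ?P" if "t \<in> S2" for t
      using \<open>s \<in> S1\<close> that by (intro ideal.span_base) auto
  qed
  from a show ?thesis
  proof (induction rule: ideal.span_induct)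
    show "ideal.subspace {a. a * b \<in> ideal.span ?P}"
      by (simp add: ideal_subspace_colon)
  qed (fact gen)
qed

lemma restrict_in_Hom_ideal:
  assumes "ideal.subspace J"
    and "\<And>x y. x \<in> J \<Longrightarrow> y \<in> J \<Longrightarrow> g (x + y) = g x + g y"
    and "\<And>r x. x \<in> J \<Longrightarrow> g (r * x) = r * g x"
  shows "restrict g J \<in> Hom_ideal J"
  using assms by (auto simp: Hom_ideal_def ideal.subspace_add ideal.subspace_scale)

lemma Hom_ideal_eq_nat_hom_ideal_iff:
  "f \<in> Hom_ideal J \<Longrightarrow> f = nat_hom_ideal J r \<longleftrightarrow> (\<forall>x\<in>J. f x = r * x)"
  by (auto simp: Hom_ideal_def nat_hom_ideal_def extensional_def fun_eq_iff)

lemma Hom_ideal_eq_mult_on_span: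
  assumes f: "f \<in> Hom_ideal (ideal.span S)" and gen: "\<And>s. s \<in> S \<Longrightarrow> f s = r * s"
  shows "\<forall>x\<in>ideal.span S. f x = r * x"
proof -
  have add: "f (x + y) = f x + f y" if "x \<in> ideal.span S" "y \<in> ideal.span S" for x y
    using f that unfolding Hom_ideal_def by auto
  have scale: "f (c * x) = c * f x" if "x \<in> ideal.span S" for x c
    using f that unfolding Hom_ideal_def by auto
  have "ideal.subspace {x \<in> ideal.span S. f x = r * x}"
    unfolding ideal.subspace_def
    using scale[OF ideal.span_zero, of 0]
    by (auto simp: ideal.span_zero ideal.span_add ideal.span_scale add scale distrib_left
        mult.left_commute)
  then have "ideal.span S \<subseteq> {x \<in> ideal.span S. f x = r * x}"
    by (rule ideal.span_minimal[rotated]) (auto simp: gen ideal.span_base)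
  then show ?thesis by blast
qed

lemma GV_ideal_iff:
  "GV_ideal J \<longleftrightarrow> fg_ideal J \<and> (\<forall>r. (\<forall>x\<in>J. r * x = 0) \<longrightarrow> r = 0)
     \<and> (\<forall>f\<in>Hom_ideal J. \<exists>r. \<forall>x\<in>J. f x = r * x)"
proof (cases "fg_ideal J")
  case True
  then have J: "ideal.subspace J" by (auto simp: fg_ideal_iff_span)
  have eq: "nat_hom_ideal J r = nat_hom_ideal J r' \<longleftrightarrow> (\<forall>x\<in>J. (r - r') * x = 0)" for r r'
    by (auto simp: nat_hom_ideal_def fun_eq_iff left_diff_distrib)
  have "inj (nat_hom_ideal J) \<longleftrightarrow> (\<forall>r. (\<forall>x\<in>J. r * x = 0) \<longrightarrow> r = 0)"
    unfolding inj_def eq by (metis diff_zero eq_iff_diff_eq_0)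
  moreover have "range (nat_hom_ideal J) \<subseteq> Hom_ideal J"
    unfolding nat_hom_ideal_def by (auto intro!: restrict_in_Hom_ideal J simp: algebra_simps)
  then have "range (nat_hom_ideal J) = Hom_ideal J \<longleftrightarrow> (\<forall>f\<in>Hom_ideal J. \<exists>r. \<forall>x\<in>J. f x = r * x)"
    by (auto simp flip: Hom_ideal_eq_nat_hom_ideal_iff)
  ultimately show ?thesis by (simp add: GV_ideal_def bij_betw_def True)
qed (simp add: GV_ideal_def)

lemma GV_ideal_UNIV: "GV_ideal (UNIV :: 'r::comm_ring_1 set)"
  unfolding GV_ideal_iff
proof (intro conjI allI impI ballI)
  show "fg_ideal (UNIV :: 'r set)"
    unfolding fg_ideal_iff_span by (intro exI[of _ "{1}"]) (simp add: ideal.span_singleton)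
  show "r = 0" if "\<forall>x\<in>UNIV. r * x = 0" for r :: 'r
    using that by (metis UNIV_I mult_1_right)
  show "\<exists>r. \<forall>x\<in>UNIV. f x = r * x" if "f \<in> Hom_ideal UNIV" for f :: "'r \<Rightarrow> 'r"
  proof (intro exI ballI)
    fix x :: 'r
    have "f (x * 1) = x * f 1" using that unfolding Hom_ideal_def by blast
    then show "f x = f 1 * x" by (simp add: mult.commute)
  qed
qed

lemma GV_ideal_cancel: "GV_ideal J \<Longrightarrow> (\<And>x. x \<in> J \<Longrightarrow> a * x = b * x) \<Longrightarrow> a = b"
  unfolding GV_ideal_iff by (metis eq_iff_diff_eq_0 left_diff_distrib)

lemma Hom_ideal_span_times_is_mult:
  fixes S1 S2 :: "'r::comm_ring_1 set"
  defines "P \<equiv> (\<lambda>(s, t). s * t) ` (S1 \<times> S2)"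
  assumes GV1: "GV_ideal (ideal.span S1)" and GV2: "GV_ideal (ideal.span S2)"
    and f: "f \<in> Hom_ideal (ideal.span P)"
  shows "\<exists>r. \<forall>x\<in>ideal.span P. f x = r * x"
proof -
  let ?J1 = "ideal.span S1" and ?J2 = "ideal.span S2"
  have add: "f (x + y) = f x + f y" if "x \<in> ideal.span P" "y \<in> ideal.span P" for x y
    using f that unfolding Hom_ideal_def by auto
  have scale: "f (c * x) = c * f x" if "x \<in> ideal.span P" for x c
    using f that unfolding Hom_ideal_def by auto
  have prod: "a * b \<in> ideal.span P" if "a \<in> ?J1" "b \<in> ?J2" for a b
    unfolding P_def using that by (rule ideal_span_times)
  have "\<forall>a\<in>?J1. \<exists>r. \<forall>y\<in>?J2. f (a * y) = r * y"
  proof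
    fix a assume a: "a \<in> ?J1"
    have "restrict (\<lambda>y. f (a * y)) ?J2 \<in> Hom_ideal ?J2"
    proof (rule restrict_in_Hom_ideal)
      show "f (a * (x + y)) = f (a * x) + f (a * y)" if "x \<in> ?J2" "y \<in> ?J2" for x y
        using that by (simp add: distrib_left add prod a)
      show "f (a * (c * x)) = c * f (a * x)" if "x \<in> ?J2" for c x
        using that by (simp add: mult.left_commute[of a] scale prod a)
    qed simp
    then have "\<exists>r. \<forall>y\<in>?J2. restrict (\<lambda>y. f (a * y)) ?J2 y = r * y"
      using GV2 unfolding GV_ideal_iff by blast
    then show "\<exists>r. \<forall>y\<in>?J2. f (a * y) = r * y"
      by simp
  qed
  then obtain R where R: "\<And>a y. a \<in> ?J1 \<Longrightarrow> y \<in> ?J2 \<Longrightarrow> f (a * y) = R a * y"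
    by (auto dest!: bchoice)
  have "restrict R ?J1 \<in> Hom_ideal ?J1"
  proof (rule restrict_in_Hom_ideal)
    fix x y assume x: "x \<in> ?J1" and y: "y \<in> ?J1"
    show "R (x + y) = R x + R y"
    proof (rule GV_ideal_cancel[OF GV2])
      fix z assume z: "z \<in> ?J2"
      have "R (x + y) * z = f (x * z + y * z)"
        using R[OF ideal.span_add[OF x y] z] by (simp add: distrib_right)
      also have "\<dots> = (R x + R y) * z"
        using R x y z by (simp add: add prod distrib_right)
      finally show "R (x + y) * z = (R x + R y) * z" .
    qed
  next
    fix c x assume x: "x \<in> ?J1"
    show "R (c * x) = c * R x"
    proof (rule GV_ideal_cancel[OF GV2])
      fix z assume z: "z \<in> ?J2"
      have "R (c * x) * z = f (c * (x * z))"
        using R[OF ideal.span_scale[OF x] z] by (simp add: mult.assoc)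
      also have "\<dots> = c * R x * z"
        using R x z by (simp add: scale prod mult.assoc)
      finally show "R (c * x) * z = c * R x * z" .
    qed
  qed simp
  then obtain r where r: "\<And>a. a \<in> ?J1 \<Longrightarrow> R a = r * a"
    using GV1 unfolding GV_ideal_iff by auto
  have "f p = r * p" if "p \<in> P" for p
  proof -
    obtain s t where "s \<in> S1" "t \<in> S2" and p: "p = s * t"
      using \<open>p \<in> P\<close> unfolding P_def by auto
    then show ?thesis using R r by (simp add: ideal.span_base mult.assoc)
  qed
  then show ?thesis using Hom_ideal_eq_mult_on_span[OF f] by blast
qed

lemma GV_ideal_span_times:
  assumes "finite S1" "finite S2"
    and GV1: "GV_ideal (ideal.span S1)" and GV2: "GV_ideal (ideal.span S2)"
  shows "GV_ideal (ideal.span ((\<lambda>(s, t). s * t) ` (S1 \<times> S2)))"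
    (is "GV_ideal (ideal.span ?P)")
  unfolding GV_ideal_iff
proof (intro conjI allI impI)
  show "fg_ideal (ideal.span ?P)"
    unfolding fg_ideal_iff_span by (intro exI[of _ ?P]) (simp add: assms(1,2))
next
  fix r assume r: "\<forall>x\<in>ideal.span ?P. r * x = 0"
  have "r * a = 0" if a: "a \<in> ideal.span S1" for a
    using GV_ideal_cancel[OF GV2, of "r * a" 0] r ideal_span_times[OF a]
    by (simp add: mult.assoc)
  then show "r = 0"
    using GV_ideal_cancel[OF GV1, of r 0] by simp
next
  show "\<forall>f\<in>Hom_ideal (ideal.span ?P). \<exists>r. \<forall>x\<in>ideal.span ?P. f x = r * x"
    using Hom_ideal_span_times_is_mult[OF GV1 GV2] by blast
qed

lemma GV_torsion_finite_annihilated: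
  assumes mA: "module sA" and tA: "GV_torsion sA" and "finite F"
  shows "\<exists>J. GV_ideal J \<and> (\<forall>j\<in>J. \<forall>a\<in>F. sA j a = 0)"
  using \<open>finite F\<close>
proof (induction rule: finite_induct)
  case empty
  then show ?case using GV_ideal_UNIV by blast
next
  case (insert a F)
  interpret module sA by fact
  obtain J1 where J1: "GV_ideal J1" "\<forall>j\<in>J1. \<forall>b\<in>F. sA j b = 0"
    using insert.IH by blast
  obtain J2 where J2: "GV_ideal J2" "\<forall>j\<in>J2. sA j a = 0"
    using tA unfolding GV_torsion_def GV_torsion_on_def by blast
  obtain S1 S2 where S1: "finite S1" "J1 = ideal.span S1" and S2: "finite S2" "J2 = ideal.span S2"
    using J1(1) J2(1) unfolding GV_ideal_iff fg_ideal_iff_span by blast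
  let ?J = "ideal.span ((\<lambda>(s, t). s * t) ` (S1 \<times> S2))"
  have "GV_ideal ?J"
    using GV_ideal_span_times S1 S2 J1(1) J2(1) by simp
  moreover have "?J \<subseteq> {r. \<forall>b\<in>insert a F. sA r b = 0}"
  proof (rule ideal.span_minimal)
    show "(\<lambda>(s, t). s * t) ` (S1 \<times> S2) \<subseteq> {r. \<forall>b\<in>insert a F. sA r b = 0}"
    proof clarify
      fix s t b assume "s \<in> S1" "t \<in> S2" and b: "b \<in> insert a F"
      then have s: "s \<in> J1" and t: "t \<in> J2" using S1 S2 by (auto simp: ideal.span_base)
      from b show "sA (s * t) b = 0"
      proof (elim insertE)
        show "sA (s * t) b = 0" if "b = a"
          using that t J2(2) by (simp flip: scale_scale)
        show "sA (s * t) b = 0" if "b \<in> F"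
          using that s J1(2) by (simp add: mult.commute[of s t] flip: scale_scale)
      qed
    qed
    show "ideal.subspace {r. \<forall>b\<in>insert a F. sA r b = 0}"
      by (rule ideal_subspace_annihilator) fact
  qed
  ultimately show ?case by blast
qed

lemma (in module) span_set_coeffs:
  assumes "v \<in> span (set xs)"
  shows "\<exists>c. v = (\<Sum>i<length xs. c i *s xs ! i)"
  using assms
proof (induction rule: span_induct_alt)
  case base
  show ?case by (intro exI[of _ "\<lambda>_. 0"]) simp
next
  case (step a x y)
  then obtain c where c: "y = (\<Sum>i<length xs. c i *s xs ! i)" by blast
  obtain i0 where i0: "i0 < length xs" "xs ! i0 = x"
    using step(1) by (auto simp: in_set_conv_nth)
  have "(\<Sum>i<length xs. (c i + (if i = i0 then a else 0)) *s xs ! i)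
      = y + (\<Sum>i<length xs. if i = i0 then a *s xs ! i else 0)"
    unfolding c by (simp add: scale_left_distrib sum.distrib if_distrib[of "\<lambda>r. r *s _"] cong: if_cong)
  also have "\<dots> = a *s x + y"
    using i0 by (simp add: add.commute)
  finally show ?case by metis
qed

lemma lincomb_eq_sum:
  assumes "length c = length xs"
  shows "lincomb sc c xs = (\<Sum>i<length xs. sc (c ! i) (xs ! i))"
proof -
  have "lincomb sc c xs = (\<Sum>i = 0..<length xs. map2 sc c xs ! i)"
    unfolding lincomb_def sum_list_sum_nth using assms by simp
  also have "\<dots> = (\<Sum>i<length xs. sc (c ! i) (xs ! i))"
    using assms by (intro sum.cong) auto
  finally show ?thesis .
qed

lemma fin_presentedE:
  assumes "fin_presented sN"
  obtains g and m nr :: nat and \<rho> where "module sN"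
    and "\<And>v. \<exists>c. v = (\<Sum>i<m. sN (c i) (g i))"
    and "\<And>k. k < nr \<Longrightarrow> (\<Sum>i<m. sN (\<rho> k i) (g i)) = 0"
    and "\<And>c. (\<Sum>i<m. sN (c i) (g i)) = 0 \<Longrightarrow> \<exists>a. \<forall>i<m. c i = (\<Sum>k<nr. a k * \<rho> k i)"
proof -
  obtain xs rels where mN: "module sN" and sp: "module.span sN (set xs) = UNIV"
    and rels: "\<forall>\<rho>\<in>set rels. length \<rho> = length xs \<and> lincomb sN \<rho> xs = 0"
    and compl: "\<forall>c. length c = length xs \<and> lincomb sN c xs = 0 \<longrightarrow>
             (\<exists>a. length a = length rels \<and>
                  c = map (\<lambda>i. \<Sum>k<length rels. a ! k * (rels ! k) ! i) [0..<length xs])"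
    using assms unfolding fin_presented_def by blast
  define m g nr \<rho> where "m = length xs" and "g i = xs ! i" and "nr = length rels"
    and "\<rho> k i = rels ! k ! i" for i k
  show ?thesis
  proof (rule that)
    show "module sN" by fact
    show "\<exists>c. v = (\<Sum>i<m. sN (c i) (g i))" for v
      using module.span_set_coeffs[OF mN] sp unfolding m_def g_def by blast
    show "(\<Sum>i<m. sN (\<rho> k i) (g i)) = 0" if "k < nr" for k
      using rels nth_mem[OF that[unfolded nr_def]] lincomb_eq_sum[of "rels ! k" xs sN]
      unfolding m_def g_def \<rho>_def by auto
    show "\<exists>a. \<forall>i<m. c i = (\<Sum>k<nr. a k * \<rho> k i)"
      if "(\<Sum>i<m. sN (c i) (g i)) = 0" for c
    proof -
      have "lincomb sN (map c [0..<m]) xs = 0"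
        using that unfolding m_def g_def by (simp add: lincomb_eq_sum)
      then obtain a where "map c [0..<m] = map (\<lambda>i. \<Sum>k<nr. a ! k * \<rho> k i) [0..<m]"
        using compl[rule_format, of "map c [0..<m]"] unfolding m_def nr_def \<rho>_def by auto
      then show ?thesis by (intro exI[of _ "\<lambda>k. a ! k"]) (simp add: map_eq_conv)
    qed
  qed
qed

lemma module_coeffs: "module (\<lambda>r (c :: 'i \<Rightarrow> 'r::comm_ring_1) i. r * c i)"
  by unfold_locales (auto simp: algebra_simps fun_eq_iff)

lemma module_hom_lincomb:
  assumes "module s"
  shows "module_hom (\<lambda>r c i. r * c i) s (\<lambda>c. \<Sum>i\<in>I. s (c i) (g i))"
proof -
  interpret module s by fact
  show ?thesis
    unfolding module_hom_iff
    by (simp add: module_coeffs assms scale_left_distrib sum.distrib scale_sum_right)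
qed

lemma free_cover_finite_approx:
  fixes s0 :: "'r::comm_ring_1 \<Rightarrow> 'p::ab_group_add \<Rightarrow> 'p"
  assumes free: "free_module s0" and hd0: "module_hom s0 sN d0" and "surj d0"
    and fp: "fin_presented sN"
  obtains L Q where "module_hom s0 s0 L" and "finite Q" and "\<And>q. q \<in> Q \<Longrightarrow> d0 q = 0"
    and "\<And>x. d0 (L x) = d0 x" and "\<And>x. d0 x = 0 \<Longrightarrow> L x \<in> module.span s0 Q"
proof -
  obtain g and m nr :: nat and \<rho> where mN: "module sN"
    and spans: "\<And>v. \<exists>c. v = (\<Sum>i<m. sN (c i) (g i))"
    and rel: "\<And>k. k < nr \<Longrightarrow> (\<Sum>i<m. sN (\<rho> k i) (g i)) = 0"
    and compl: "\<And>c. (\<Sum>i<m. sN (c i) (g i)) = 0 \<Longrightarrow> \<exists>a. \<forall>i<m. c i = (\<Sum>k<nr. a k * \<rho> k i)"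
    using fin_presentedE[OF fp] by blast
  interpret D0: module_hom s0 sN d0 by fact
  define p where "p i = inv d0 (g i)" for i
  have dp: "d0 (p i) = g i" for i
    unfolding p_def using \<open>surj d0\<close> by (rule surj_f_inv_f)
  (* R^m is modelled as nat => 'r; the maps \<pi> : R^m -> N and \<iota> : R^m -> P0 only read the
     coordinates below m. L is \<iota> after a lift \<chi> of d0 through \<pi>. *)
  define \<pi> where "\<pi> c = (\<Sum>i<m. sN (c i) (g i))" for c :: "nat \<Rightarrow> 'r"
  define \<iota> where "\<iota> c = (\<Sum>i<m. s0 (c i) (p i))" for c :: "nat \<Rightarrow> 'r"
  have h\<pi>: "module_hom (\<lambda>r c i. r * c i) sN \<pi>" and h\<iota>: "module_hom (\<lambda>r c i. r * c i) s0 \<iota>"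
    unfolding \<pi>_def[abs_def] \<iota>_def[abs_def] using module_hom_lincomb D0.m1.module_axioms mN
    by blast+
  have d0\<iota>: "d0 (\<iota> c) = \<pi> c" for c
    unfolding \<iota>_def \<pi>_def by (simp add: D0.sum D0.scale dp)
  obtain \<chi> where h\<chi>: "module_hom s0 (\<lambda>r c i. r * c i) \<chi>" and \<pi>\<chi>: "\<And>x. \<pi> (\<chi> x) = d0 x"
    using free_module_lift[OF free hd0 h\<pi>] spans unfolding \<pi>_def by blast
  define Q where "Q = (\<lambda>k. \<iota> (\<rho> k)) ` {..<nr}"
  show ?thesis
  proof (rule that)
    show "module_hom s0 s0 (\<lambda>x. \<iota> (\<chi> x))"
      using module_hom_compose[OF h\<chi> h\<iota>] by (simp add: comp_def)
    show "finite Q" unfolding Q_def by simp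
    show "d0 q = 0" if "q \<in> Q" for q
      using that rel unfolding Q_def by (auto simp: d0\<iota> \<pi>_def)
    show "d0 (\<iota> (\<chi> x)) = d0 x" for x
      by (simp add: d0\<iota> \<pi>\<chi>)
    show "\<iota> (\<chi> x) \<in> module.span s0 Q" if x0: "d0 x = 0" for x
    proof -
      (* \<chi> x is then a relation among the generators g i, i.e. a combination of the \<rho> k *)
      have "(\<Sum>i<m. sN (\<chi> x i) (g i)) = 0"
        using \<pi>\<chi>[of x] x0 unfolding \<pi>_def by simp
      then obtain a where a: "\<forall>i<m. \<chi> x i = (\<Sum>k<nr. a k * \<rho> k i)"
        using compl by blast
      have "\<iota> (\<chi> x) = (\<Sum>i<m. \<Sum>k<nr. s0 (a k) (s0 (\<rho> k i) (p i)))"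
        unfolding \<iota>_def by (simp add: a D0.m1.scale_sum_left)
      also have "\<dots> = (\<Sum>k<nr. s0 (a k) (\<iota> (\<rho> k)))"
        unfolding \<iota>_def by (subst sum.swap) (simp add: D0.m1.scale_sum_right)
      also have "\<dots> \<in> module.span s0 Q"
        unfolding Q_def by (intro D0.m1.span_sum D0.m1.span_scale D0.m1.span_base) auto
      finally show ?thesis .
    qed
  qed
qed

lemma free_resolution2_comparison:
  assumes res: "free_resolution2 s2 d2 s1 d1 s0 d0 sN" and fp: "fin_presented sN"
  obtains Y Z where "module_hom s0 s1 Y" and "finite Z"
    and "\<And>x. \<exists>z\<in>module.span s1 Z. \<exists>w. x = Y (d1 x) + z + d2 w"
proof -
  have free0: "free_module s0" and hd1: "module_hom s1 s0 d1" and hd0: "module_hom s0 sN d0"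
    and "surj d0" and ker0: "range d1 = {x. d0 x = 0}" and ker1: "range d2 = {x. d1 x = 0}"
    using res unfolding free_resolution2_def by auto
  interpret D1: module_hom s1 s0 d1 by fact
  interpret P00: module_pair s0 s0 by (simp add: module_pair_def D1.m2.module_axioms)
  obtain L Q where hL: "module_hom s0 s0 L" and "finite Q" and Q: "\<And>q. q \<in> Q \<Longrightarrow> d0 q = 0"
    and d0L: "\<And>x. d0 (L x) = d0 x" and L: "\<And>x. d0 x = 0 \<Longrightarrow> L x \<in> D1.m2.span Q"
    using free_cover_finite_approx[OF free0 hd0 \<open>surj d0\<close> fp] by blast
  have "module_hom s0 s0 (\<lambda>x. x - L x)"
    by (intro P00.module_hom_sub hL D1.m2.module_hom_ident)
  moreover have "range (\<lambda>x. x - L x) \<subseteq> range d1"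
    using ker0 d0L module_hom.diff[OF hd0] by auto
  ultimately obtain Y where hY: "module_hom s0 s1 Y" and d1Y: "\<And>x. d1 (Y x) = x - L x"
    using free_module_lift[OF free0 _ hd1] by blast
  define Z where "Z = inv d1 ` Q"
  have "d1 (inv d1 q) = q" if "q \<in> Q" for q
    using Q[OF that] ker0 by (intro f_inv_into_f) auto
  then have d1Z: "d1 ` Z = Q"
    unfolding Z_def image_image by (simp cong: image_cong_simp)
  show ?thesis
  proof (rule that[OF hY])
    show "finite Z" unfolding Z_def using \<open>finite Q\<close> by simp
    fix x
    have "L (d1 x) \<in> D1.m2.span (d1 ` Z)"
      using L ker0 d1Z by auto
    then obtain z where z: "z \<in> D1.m1.span Z" and d1z: "d1 z = L (d1 x)"
      unfolding D1.span_image by auto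
    have "d1 (x - Y (d1 x) - z) = 0"
      by (simp add: D1.diff d1Y d1z)
    then have "x - Y (d1 x) - z \<in> range d2"
      using ker1 by simp
    then obtain w where "x - Y (d1 x) - z = d2 w" by blast
    then have "x = Y (d1 x) + z + d2 w" by (simp add: algebra_simps)
    with z show "\<exists>z\<in>D1.m1.span Z. \<exists>w. x = Y (d1 x) + z + d2 w" by blast
  qed
qed

lemma ext1_coboundaries_closed:
  assumes "module s0" and "module sA"
  shows "(\<lambda>x. 0) \<in> ext1_coboundaries d1 s0 sA"
    and "\<beta> \<in> ext1_coboundaries d1 s0 sA \<Longrightarrow> \<beta>' \<in> ext1_coboundaries d1 s0 sA \<Longrightarrow>
      (\<lambda>x. \<beta> x + \<beta>' x) \<in> ext1_coboundaries d1 s0 sA"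
    and "\<beta> \<in> ext1_coboundaries d1 s0 sA \<Longrightarrow> \<beta>' \<in> ext1_coboundaries d1 s0 sA \<Longrightarrow>
      (\<lambda>x. \<beta> x - \<beta>' x) \<in> ext1_coboundaries d1 s0 sA"
    and "\<beta> \<in> ext1_coboundaries d1 s0 sA \<Longrightarrow> (\<lambda>x. sA r (\<beta> x)) \<in> ext1_coboundaries d1 s0 sA"
proof -
  interpret module_pair s0 sA using assms by (simp add: module_pair_def)
  show "(\<lambda>x. 0) \<in> ext1_coboundaries d1 s0 sA"
    unfolding ext1_coboundaries_def using module_hom_zero by (auto simp: comp_def)
  show "(\<lambda>x. \<beta> x + \<beta>' x) \<in> ext1_coboundaries d1 s0 sA"
    and "(\<lambda>x. \<beta> x - \<beta>' x) \<in> ext1_coboundaries d1 s0 sA"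
    if \<beta>: "\<beta> \<in> ext1_coboundaries d1 s0 sA" "\<beta>' \<in> ext1_coboundaries d1 s0 sA"
  proof -
    obtain \<psi> \<psi>' where \<psi>: "module_hom s0 sA \<psi>" "module_hom s0 sA \<psi>'"
      and "\<beta> = \<psi> \<circ> d1" "\<beta>' = \<psi>' \<circ> d1"
      using \<beta> unfolding ext1_coboundaries_def by blast
    then have "(\<lambda>x. \<beta> x + \<beta>' x) = (\<lambda>u. \<psi> u + \<psi>' u) \<circ> d1"
      and "(\<lambda>x. \<beta> x - \<beta>' x) = (\<lambda>u. \<psi> u - \<psi>' u) \<circ> d1"
      by auto
    then show "(\<lambda>x. \<beta> x + \<beta>' x) \<in> ext1_coboundaries d1 s0 sA"
      and "(\<lambda>x. \<beta> x - \<beta>' x) \<in> ext1_coboundaries d1 s0 sA"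
      unfolding ext1_coboundaries_def using module_hom_add[OF \<psi>] module_hom_sub[OF \<psi>] by blast+
  qed
  show "(\<lambda>x. sA r (\<beta> x)) \<in> ext1_coboundaries d1 s0 sA"
    if \<beta>: "\<beta> \<in> ext1_coboundaries d1 s0 sA"
  proof -
    obtain \<psi> where \<psi>: "module_hom s0 sA \<psi>" and "\<beta> = \<psi> \<circ> d1"
      using \<beta> unfolding ext1_coboundaries_def by blast
    then have "(\<lambda>x. sA r (\<beta> x)) = (\<lambda>u. sA r (\<psi> u)) \<circ> d1" by auto
    then show ?thesis
      unfolding ext1_coboundaries_def using module_hom_scale[OF \<psi>] by blast
  qed
qed

lemma Ext1_scale_coset_eq_zero:
  assumes m0: "module s0" and mA: "module sA"
    and cob: "(\<lambda>x. sA r (\<phi> x)) \<in> ext1_coboundaries d1 s0 sA"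
  shows "Ext1_scale d1 s0 sA r (ext1_coset (ext1_coboundaries d1 s0 sA) \<phi>) = Ext1_zero d1 s0 sA"
proof -
  interpret module sA by fact
  let ?B = "ext1_coboundaries d1 s0 sA"
  note closed = ext1_coboundaries_closed[OF m0 mA]
  show ?thesis
  proof (intro equalityI subsetI)
    fix g assume "g \<in> Ext1_scale d1 s0 sA r (ext1_coset ?B \<phi>)"
    then obtain \<beta> \<beta>' where "\<beta> \<in> ?B" "\<beta>' \<in> ?B" and g: "g = (\<lambda>x. sA r (\<phi> x + \<beta>' x) + \<beta> x)"
      unfolding Ext1_scale_def ext1_coset_def by blast
    then have "(\<lambda>x. (sA r (\<phi> x) + sA r (\<beta>' x)) + \<beta> x) \<in> ?B"
      by (intro closed(2) cob closed(4))
    then show "g \<in> Ext1_zero d1 s0 sA"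
      unfolding g Ext1_zero_def by (simp add: scale_right_distrib)
  next
    fix g assume "g \<in> Ext1_zero d1 s0 sA"
    then have "(\<lambda>x. g x - sA r (\<phi> x)) \<in> ?B"
      unfolding Ext1_zero_def using cob by (rule closed(3))
    moreover have "\<phi> \<in> ext1_coset ?B \<phi>"
      unfolding ext1_coset_def by (intro CollectI exI[of _ "\<lambda>x. 0"]) (simp add: closed(1))
    ultimately show "g \<in> Ext1_scale d1 s0 sA r (ext1_coset ?B \<phi>)"
      unfolding Ext1_scale_def
      by (intro CollectI exI[of _ \<phi>] exI[of _ "\<lambda>x. g x - sA r (\<phi> x)"]) auto
  qed
qed

lemma ext1_cocycle_GV_torsion:
  assumes res: "free_resolution2 s2 d2 s1 d1 s0 d0 sN" and fp: "fin_presented sN"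
    and mA: "module sA" and tA: "GV_torsion sA" and \<phi>: "\<phi> \<in> ext1_cocycles d2 s1 sA"
  shows "\<exists>J. GV_ideal J \<and> (\<forall>j\<in>J. (\<lambda>x. sA j (\<phi> x)) \<in> ext1_coboundaries d1 s0 sA)"
proof -
  obtain Y Z where hY: "module_hom s0 s1 Y" and "finite Z"
    and split: "\<And>x. \<exists>z\<in>module.span s1 Z. \<exists>w. x = Y (d1 x) + z + d2 w"
    using free_resolution2_comparison[OF res fp] by blast
  have h\<phi>: "module_hom s1 sA \<phi>" and \<phi>d2: "\<And>w. \<phi> (d2 w) = 0"
    using \<phi> unfolding ext1_cocycles_def by auto
  interpret \<Phi>: module_hom s1 sA \<phi> by fact
  interpret P0A: module_pair s0 sA using hY mA by (simp add: module_pair_def module_hom_iff)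
  obtain J where "GV_ideal J" and J: "\<And>j z. j \<in> J \<Longrightarrow> z \<in> Z \<Longrightarrow> sA j (\<phi> z) = 0"
    using GV_torsion_finite_annihilated[OF mA tA finite_imageI[OF \<open>finite Z\<close>, of \<phi>]] by blast
  have "(\<lambda>x. sA j (\<phi> x)) = (\<lambda>u. sA j (\<phi> (Y u))) \<circ> d1" if j: "j \<in> J" for j
  proof
    fix x
    obtain z w where z: "z \<in> module.span s1 Z" and x: "x = Y (d1 x) + z + d2 w"
      using split by blast
    interpret j\<Phi>: module_hom s1 sA "\<lambda>z. sA j (\<phi> z)"
      using module_hom_compose[OF h\<phi> \<Phi>.m2.module_hom_scale_self[of j]] by (simp add: comp_def)
    have "sA j (\<phi> z) = 0"
      using j\<Phi>.eq_0_on_span[OF J[OF j] z] .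
    then have "sA j (\<phi> x) = sA j (\<phi> (Y (d1 x)))"
      by (subst x) (simp add: \<Phi>.add \<phi>d2 \<Phi>.m2.scale_right_distrib)
    then show "sA j (\<phi> x) = ((\<lambda>u. sA j (\<phi> (Y u))) \<circ> d1) x" by simp
  qed
  moreover have "module_hom s0 sA (\<lambda>u. sA j (\<phi> (Y u)))" for j
    using P0A.module_hom_scale[OF module_hom_compose[OF hY h\<phi>]] by (simp add: comp_def)
  ultimately show ?thesis
    using \<open>GV_ideal J\<close> unfolding ext1_coboundaries_def by blast
qed

theorem lemma2p3:
  fixes sA :: "'r::comm_ring_1 \<Rightarrow> 'a::ab_group_add \<Rightarrow> 'a"
    and sN :: "'r \<Rightarrow> 'n::ab_group_add \<Rightarrow> 'n"
    and s2 :: "'r \<Rightarrow> 'p2::ab_group_add \<Rightarrow> 'p2" and d2 :: "'p2 \<Rightarrow> 'p1::ab_group_add"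
    and s1 :: "'r \<Rightarrow> 'p1 \<Rightarrow> 'p1" and d1 :: "'p1 \<Rightarrow> 'p0::ab_group_add"
    and s0 :: "'r \<Rightarrow> 'p0 \<Rightarrow> 'p0" and d0 :: "'p0 \<Rightarrow> 'n"
  assumes "module sA"
    and "GV_torsion sA"
  shows "abs_w_pure_wrt sA s2 d2 s1 d1 s0 d0 sN"
  unfolding abs_w_pure_wrt_def GV_torsion_on_def
proof (intro impI ballI)
  assume "fin_presented sN \<and> free_resolution2 s2 d2 s1 d1 s0 d0 sN"
  then have fp: "fin_presented sN" and res: "free_resolution2 s2 d2 s1 d1 s0 d0 sN" by auto
  then have m0: "module s0" by (simp add: free_resolution2_def free_module_def)
  fix C assume "C \<in> Ext1 d2 s1 d1 s0 sA"
  then obtain \<phi> where \<phi>: "\<phi> \<in> ext1_cocycles d2 s1 sA"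
    and C: "C = ext1_coset (ext1_coboundaries d1 s0 sA) \<phi>"
    unfolding Ext1_def by blast
  obtain J where "GV_ideal J" and "\<forall>j\<in>J. (\<lambda>x. sA j (\<phi> x)) \<in> ext1_coboundaries d1 s0 sA"
    using ext1_cocycle_GV_torsion[OF res fp assms \<phi>] by blast
  then show "\<exists>J. GV_ideal J \<and> (\<forall>j\<in>J. Ext1_scale d1 s0 sA j C = Ext1_zero d1 s0 sA)"
    unfolding C using Ext1_scale_coset_eq_zero[OF m0 \<open>module sA\<close>] by blast
qed

end
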